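(* Consider the ride-hailing model in the context. If $(\bm x^A,\bm w^A,\bm x^C,\bm w^C)$ is a mixed-fleet equilibrium and $\bm b^C_e=(\sum_{j=1}^L x^C_{ji})_{i=1}^L$, then $\bm x^C$ is an optimal solution of $\mathcal{CV}(\bm b^C_e)$ and $\bm w^C$ is a vector of Lagrange multipliers of its capacity constraints.
   Context: Model. There are $L$ regions $\{1,\dots,L\}$. For regions $i,j$, $b_{ij}\ge0$ is the customer rate from $i$ to $j$; $b_i=\sum_j b_{ij}$ (assumed $>0$), $q_{ij}=b_{ij}/b_i$. Travel times satisfy $t_{ij}>0$ for $i\ne j$, $t_{ii}=0$. Constants: $p>0$, $c\ge0$, $R\in(0,1)$, $N>0$, $M\ge0$. For $i,\alpha$: $\tau^{dr}_{i\alpha}=t_{i\alpha}+\sum_j q_{\alpha j}t_{\alpha j}$, $r^A_{i\alpha}=p\sum_j q_{\alpha j}t_{\alpha j}-c\tau^{dr}_{i\alpha}$, $r^C_{i\alpha}=p(1-R)\sum_j q_{\alpha j}t_{\alpha j}-c\tau^{dr}_{i\alpha}$, $r^{C2P}_{i\alpha}=pR\sum_j q_{\alpha j}t_{\alpha j}$. A matrix $\bm x\in\mathbb R^{L\times L}_{\ge0}$ satisfies flow balance if $\sum_j(\sum_k x_{kj})q_{ji}=\sum_\alpha x_{i\alpha}$ for all $i$. $\mathcal{CV}(\bm b^C)$: maximize $N\log\sum_{i,\alpha}r^C_{i\alpha}x_{i\alpha}-\sum_{i,\alpha}\tau^{dr}_{i\alpha}x_{i\alpha}$ over $\bm x\ge0$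 satisfying flow balance and $\sum_j x_{ji}\le b^C_i$ for all $i$. Mixed-fleet equilibrium: a tuple $(\bm x^A,\bm w^A,\bm x^C,\bm w^C)$ with $\bm x^A,\bm x^C\in\mathbb R^{L\times L}_{\ge0}$, $\bm w^A,\bm w^C\in\mathbb R^L_{\ge0}$ such that (i) $\sum_j(x^A_{ji}+x^C_{ji})\le b_i$ for all $i$; $\bm x^A,\bm x^C$ satisfy flow balance; $\sum_{i,\alpha}(\tau^{dr}_{i\alpha}+w^A_\alpha)x^A_{i\alpha}\le M$ and $\sum_{i,\alpha}(\tau^{dr}_{i\alpha}+w^C_\alpha)x^C_{i\alpha}=N$; (ii) $\bm x^C$ maximizes $\sum_{i,\alpha}r^C_{i\alpha}x_{i\alpha}$ over all $\bm x\ge0$ satisfying flow balance and $\sum_{i,\alpha}(\tau^{dr}_{i\alpha}+w^C_\alpha)x_{i\alpha}=N$; (iii) the platform profit $\sum_{i,\alpha}r^A_{i\alpha}x^A_{i\alpha}+\sum_{i,\alpha}r^{C2P}_{i\alpha}x^C_{i\alpha}$ is maximal among all tuples satisfying (i) and (ii). *)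

theory Defs
  imports Complex_Main "HOL-Library.Extended_Real"
begin

text \<open>Regions are the elements of a finite type 'n. Rates b i j, travel times t i j.
  Matrices are functions 'n \<Rightarrow> 'n \<Rightarrow> real, vectors are functions 'n \<Rightarrow> real.\<close>

definition q :: "('n::finite \<Rightarrow> 'n \<Rightarrow> real) \<Rightarrow> 'n \<Rightarrow> 'n \<Rightarrow> real" where
  "q b i j = b i j / (\<Sum>k\<in>UNIV. b i k)"

definition avg_trip :: "('n::finite \<Rightarrow> 'n \<Rightarrow> real) \<Rightarrow> ('n \<Rightarrow> 'n \<Rightarrow> real) \<Rightarrow> 'n \<Rightarrow> real" where
  "avg_trip b t \<alpha> = (\<Sum>j\<in>UNIV. q b \<alpha> j * t \<alpha> j)"

definition tau_dr :: "('n::finite \<Rightarrow> 'n \<Rightarrow> real) \<Rightarrow> ('n \<Rightarrow> 'n \<Rightarrow> real) \<Rightarrow> 'n \<Rightarrow> 'n \<Rightarrow> real" where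
  "tau_dr b t i \<alpha> = t i \<alpha> + avg_trip b t \<alpha>"

definition rA :: "real \<Rightarrow> real \<Rightarrow> ('n::finite \<Rightarrow> 'n \<Rightarrow> real) \<Rightarrow> ('n \<Rightarrow> 'n \<Rightarrow> real) \<Rightarrow> 'n \<Rightarrow> 'n \<Rightarrow> real" where
  "rA p c b t i \<alpha> = p * avg_trip b t \<alpha> - c * tau_dr b t i \<alpha>"

definition rC :: "real \<Rightarrow> real \<Rightarrow> real \<Rightarrow> ('n::finite \<Rightarrow> 'n \<Rightarrow> real) \<Rightarrow> ('n \<Rightarrow> 'n \<Rightarrow> real) \<Rightarrow> 'n \<Rightarrow> 'n \<Rightarrow> real" where
  "rC p c R b t i \<alpha> = p * (1 - R) * avg_trip b t \<alpha> - c * tau_dr b t i \<alpha>"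

definition rC2P :: "real \<Rightarrow> real \<Rightarrow> ('n::finite \<Rightarrow> 'n \<Rightarrow> real) \<Rightarrow> ('n \<Rightarrow> 'n \<Rightarrow> real) \<Rightarrow> 'n \<Rightarrow> 'n \<Rightarrow> real" where
  "rC2P p R b t i \<alpha> = p * R * avg_trip b t \<alpha>"

definition nonneg_mat :: "('n \<Rightarrow> 'n \<Rightarrow> real) \<Rightarrow> bool" where
  "nonneg_mat x \<longleftrightarrow> (\<forall>i j. 0 \<le> x i j)"

definition nonneg_vec :: "('n \<Rightarrow> real) \<Rightarrow> bool" where
  "nonneg_vec w \<longleftrightarrow> (\<forall>i. 0 \<le> w i)"

definition flow_balance :: "('n::finite \<Rightarrow> 'n \<Rightarrow> real) \<Rightarrow> ('n \<Rightarrow> 'n \<Rightarrow> real) \<Rightarrow> bool" where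
  "flow_balance b x \<longleftrightarrow>
     (\<forall>i. (\<Sum>j\<in>UNIV. (\<Sum>k\<in>UNIV. x k j) * q b j i) = (\<Sum>\<alpha>\<in>UNIV. x i \<alpha>))"

definition wsum :: "('n::finite \<Rightarrow> 'n \<Rightarrow> real) \<Rightarrow> ('n \<Rightarrow> 'n \<Rightarrow> real) \<Rightarrow> real" where
  "wsum f x = (\<Sum>i\<in>UNIV. \<Sum>\<alpha>\<in>UNIV. f i \<alpha> * x i \<alpha>)"

definition inflow :: "('n::finite \<Rightarrow> 'n \<Rightarrow> real) \<Rightarrow> 'n \<Rightarrow> real" where
  "inflow x i = (\<Sum>j\<in>UNIV. x j i)"

definition CV_feasible ::
  "('n::finite \<Rightarrow> 'n \<Rightarrow> real) \<Rightarrow> ('n \<Rightarrow> real) \<Rightarrow> ('n \<Rightarrow> 'n \<Rightarrow> real) \<Rightarrow> bool" where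
  "CV_feasible b bC x \<longleftrightarrow> nonneg_mat x \<and> flow_balance b x \<and> (\<forall>i. inflow x i \<le> bC i)"

text \<open>Objective N log(\<Sum> r^C x) - \<Sum> \<tau> x, with the standard extended-value
  convention log z = -\<infinity> for z \<le> 0.\<close>
definition CV_obj ::
  "real \<Rightarrow> real \<Rightarrow> real \<Rightarrow> real \<Rightarrow> ('n::finite \<Rightarrow> 'n \<Rightarrow> real) \<Rightarrow> ('n \<Rightarrow> 'n \<Rightarrow> real)
   \<Rightarrow> ('n \<Rightarrow> 'n \<Rightarrow> real) \<Rightarrow> ereal" where
  "CV_obj p c R N b t x =
     (if 0 < wsum (rC p c R b t) x
      then ereal (N * ln (wsum (rC p c R b t) x) - wsum (tau_dr b t) x)
      else -\<infinity>)"

definition CV_optimal ::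
  "real \<Rightarrow> real \<Rightarrow> real \<Rightarrow> real \<Rightarrow> ('n::finite \<Rightarrow> 'n \<Rightarrow> real) \<Rightarrow> ('n \<Rightarrow> 'n \<Rightarrow> real)
   \<Rightarrow> ('n \<Rightarrow> real) \<Rightarrow> ('n \<Rightarrow> 'n \<Rightarrow> real) \<Rightarrow> bool" where
  "CV_optimal p c R N b t bC x \<longleftrightarrow>
     CV_feasible b bC x \<and>
     (\<forall>y. CV_feasible b bC y \<longrightarrow> CV_obj p c R N b t y \<le> CV_obj p c R N b t x)"

definition CV_lagrangian ::
  "real \<Rightarrow> real \<Rightarrow> real \<Rightarrow> real \<Rightarrow> ('n::finite \<Rightarrow> 'n \<Rightarrow> real) \<Rightarrow> ('n \<Rightarrow> 'n \<Rightarrow> real)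
   \<Rightarrow> ('n \<Rightarrow> real) \<Rightarrow> ('n \<Rightarrow> real) \<Rightarrow> ('n \<Rightarrow> 'n \<Rightarrow> real) \<Rightarrow> ereal" where
  "CV_lagrangian p c R N b t bC lam x =
     CV_obj p c R N b t x - ereal (\<Sum>i\<in>UNIV. lam i * (inflow x i - bC i))"

definition CV_capacity_multipliers ::
  "real \<Rightarrow> real \<Rightarrow> real \<Rightarrow> real \<Rightarrow> ('n::finite \<Rightarrow> 'n \<Rightarrow> real) \<Rightarrow> ('n \<Rightarrow> 'n \<Rightarrow> real)
   \<Rightarrow> ('n \<Rightarrow> real) \<Rightarrow> ('n \<Rightarrow> 'n \<Rightarrow> real) \<Rightarrow> ('n \<Rightarrow> real) \<Rightarrow> bool" where
  "CV_capacity_multipliers p c R N b t bC x lam \<longleftrightarrow>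
     nonneg_vec lam \<and>
     (\<forall>i. lam i * (inflow x i - bC i) = 0) \<and>
     (\<forall>y. nonneg_mat y \<and> flow_balance b y \<longrightarrow>
          CV_lagrangian p c R N b t bC lam y \<le> CV_lagrangian p c R N b t bC lam x)"

definition eq_cond_i ::
  "real \<Rightarrow> real \<Rightarrow> ('n::finite \<Rightarrow> 'n \<Rightarrow> real) \<Rightarrow> ('n \<Rightarrow> 'n \<Rightarrow> real)
   \<Rightarrow> ('n \<Rightarrow> 'n \<Rightarrow> real) \<Rightarrow> ('n \<Rightarrow> real) \<Rightarrow> ('n \<Rightarrow> 'n \<Rightarrow> real) \<Rightarrow> ('n \<Rightarrow> real) \<Rightarrow> bool" where
  "eq_cond_i N M b t xA wA xC wC \<longleftrightarrow>
     nonneg_mat xA \<and> nonneg_vec wA \<and> nonneg_mat xC \<and> nonneg_vec wC \<and>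
     (\<forall>i. inflow xA i + inflow xC i \<le> (\<Sum>j\<in>UNIV. b i j)) \<and>
     flow_balance b xA \<and> flow_balance b xC \<and>
     wsum (\<lambda>i \<alpha>. tau_dr b t i \<alpha> + wA \<alpha>) xA \<le> M \<and>
     wsum (\<lambda>i \<alpha>. tau_dr b t i \<alpha> + wC \<alpha>) xC = N"

definition eq_cond_ii ::
  "real \<Rightarrow> real \<Rightarrow> real \<Rightarrow> real \<Rightarrow> ('n::finite \<Rightarrow> 'n \<Rightarrow> real) \<Rightarrow> ('n \<Rightarrow> 'n \<Rightarrow> real)
   \<Rightarrow> ('n \<Rightarrow> 'n \<Rightarrow> real) \<Rightarrow> ('n \<Rightarrow> real) \<Rightarrow> bool" where
  "eq_cond_ii p c R N b t xC wC \<longleftrightarrow>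
     (\<forall>x. nonneg_mat x \<and> flow_balance b x \<and>
          wsum (\<lambda>i \<alpha>. tau_dr b t i \<alpha> + wC \<alpha>) x = N \<longrightarrow>
          wsum (rC p c R b t) x \<le> wsum (rC p c R b t) xC)"

definition platform_profit ::
  "real \<Rightarrow> real \<Rightarrow> real \<Rightarrow> ('n::finite \<Rightarrow> 'n \<Rightarrow> real) \<Rightarrow> ('n \<Rightarrow> 'n \<Rightarrow> real)
   \<Rightarrow> ('n \<Rightarrow> 'n \<Rightarrow> real) \<Rightarrow> ('n \<Rightarrow> 'n \<Rightarrow> real) \<Rightarrow> real" where
  "platform_profit p c R b t xA xC = wsum (rA p c b t) xA + wsum (rC2P p R b t) xC"

definition mixed_fleet_equilibrium ::
  "real \<Rightarrow> real \<Rightarrow> real \<Rightarrow> real \<Rightarrow> real \<Rightarrow> ('n::finite \<Rightarrow> 'n \<Rightarrow> real) \<Rightarrow> ('n \<Rightarrow> 'n \<Rightarrow> real)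
   \<Rightarrow> ('n \<Rightarrow> 'n \<Rightarrow> real) \<Rightarrow> ('n \<Rightarrow> real) \<Rightarrow> ('n \<Rightarrow> 'n \<Rightarrow> real) \<Rightarrow> ('n \<Rightarrow> real) \<Rightarrow> bool" where
  "mixed_fleet_equilibrium p c R N M b t xA wA xC wC \<longleftrightarrow>
     eq_cond_i N M b t xA wA xC wC \<and> eq_cond_ii p c R N b t xC wC \<and>
     (\<forall>xA' wA' xC' wC'. eq_cond_i N M b t xA' wA' xC' wC' \<and> eq_cond_ii p c R N b t xC' wC' \<longrightarrow>
        platform_profit p c R b t xA' xC' \<le> platform_profit p c R b t xA xC)"

end

theory Submission
  imports Defs
begin

text \<open>Condition (ii) says that xC maximises the linear revenue r(x) = \<Sum> rC x over the
  flow-balanced cone cut by the budget hyperplane s(x) = N, where s(x) = \<Sum> (tau_dr + wC) x.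
  By homogeneity of the cone, N r(y) \<le> s(y) r(xC) for every y in it. Since \<Sum> wC x is
  exactly the multiplier term \<Sum>i. wC i * inflow x i, the Lagrangian of CV(inflow xC) at y
  is N ln r(y) - s(y) up to a constant, and ln z \<le> z - 1 shows that it is maximal on the
  hyperplane s = N, in particular at xC. Optimality then follows from this saddle-point
  property by weak duality.\<close>

lemma wsum_scale: "wsum f (\<lambda>i j. k * y i j) = k * wsum f y"
  by (simp add: wsum_def sum_distrib_left algebra_simps)

lemma wsum_add_matrix: "wsum f (\<lambda>i j. y i j + z i j) = wsum f y + wsum f z"
  by (simp add: wsum_def sum.distrib algebra_simps)

lemma wsum_add_weights: "wsum (\<lambda>i \<alpha>. f i \<alpha> + g i \<alpha>) y = wsum f y + wsum g y"
  by (simp add: wsum_def sum.distrib algebra_simps)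

lemma wsum_column_weights: "wsum (\<lambda>i \<alpha>. w \<alpha>) y = (\<Sum>i\<in>UNIV. w i * inflow y i)"
  unfolding wsum_def inflow_def by (subst sum.swap) (simp add: sum_distrib_left)

lemma wsum_nonneg: "(\<And>i \<alpha>. 0 \<le> f i \<alpha>) \<Longrightarrow> nonneg_mat y \<Longrightarrow> 0 \<le> wsum f y"
  unfolding wsum_def nonneg_mat_def by (simp add: sum_nonneg)

lemma flow_balance_scale: "flow_balance b y \<Longrightarrow> flow_balance b (\<lambda>i j. k * y i j)"
  unfolding flow_balance_def by (simp add: sum_distrib_left[symmetric] mult.assoc)

lemma flow_balance_add:
  "flow_balance b y \<Longrightarrow> flow_balance b z \<Longrightarrow> flow_balance b (\<lambda>i j. y i j + z i j)"
  unfolding flow_balance_def by (simp add: sum.distrib distrib_right)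

lemma tau_dr_nonneg:
  assumes "\<forall>i j. 0 \<le> b i j" and "\<forall>i j. 0 \<le> t i j"
  shows "0 \<le> tau_dr b t i \<alpha>"
  using assms unfolding tau_dr_def avg_trip_def q_def by (simp add: sum_nonneg)

lemma budget_homogeneity_bound:
  fixes g r x y :: "'n::finite \<Rightarrow> 'n \<Rightarrow> real"
  assumes N_pos: "0 < N"
    and x_max: "\<forall>z. nonneg_mat z \<and> flow_balance b z \<and> wsum g z = N \<longrightarrow> wsum r z \<le> wsum r x"
    and x: "nonneg_mat x" "flow_balance b x" "wsum g x = N"
    and y: "nonneg_mat y" "flow_balance b y" and budget_nonneg: "0 \<le> wsum g y"
  shows "N * wsum r y \<le> wsum g y * wsum r x"
proof (cases "wsum g y = 0")
  case True
  \<comment> \<open>a budget-free direction can be added to x without leaving the budget hyperplane\<close>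
  have "nonneg_mat (\<lambda>i j. x i j + y i j)"
    using x(1) y(1) by (simp add: nonneg_mat_def add_nonneg_nonneg)
  then have "wsum r (\<lambda>i j. x i j + y i j) \<le> wsum r x"
    using x y True by (intro x_max[rule_format]) (simp add: wsum_add_matrix flow_balance_add)
  then show ?thesis using True N_pos by (simp add: wsum_add_matrix mult_le_0_iff)
next
  case False
  with budget_nonneg have s_pos: "0 < wsum g y" by simp
  define k where "k = N / wsum g y"
  have "k * wsum g y = N" and "0 < k"
    using s_pos N_pos by (simp_all add: k_def)
  then have "k * wsum r y \<le> wsum r x"
    using y by (subst wsum_scale[symmetric], intro x_max[rule_format])
      (simp add: wsum_scale flow_balance_scale nonneg_mat_def)
  then have "wsum g y * (k * wsum r y) \<le> wsum g y * wsum r x"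
    using s_pos by (simp add: mult_left_mono)
  then show ?thesis
    using \<open>k * wsum g y = N\<close> by (metis mult.assoc mult.commute)
qed

lemma log_utility_minus_budget_le:
  fixes N u s \<rho> :: real
  assumes "0 < N" "0 < u" "0 \<le> s" "N * u \<le> s * \<rho>"
  shows "N * ln u - s \<le> N * ln \<rho> - N"
proof -
  have "0 < s * \<rho>"
    using assms by (meson mult_pos_pos order.strict_trans2)
  then have s_pos: "0 < s" and \<rho>_pos: "0 < \<rho>"
    using assms(3) by (auto simp: zero_less_mult_iff)
  have "u \<le> s * \<rho> / N"
    using assms by (simp add: field_simps)
  then have "N * ln u \<le> N * ln (s * \<rho> / N)"
    using assms by simp
  also have "\<dots> = N * ln (s / N) + N * ln \<rho>"
    using s_pos \<rho>_pos assms(1) by (simp add: ln_mult ln_div algebra_simps)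
  also have "\<dots> \<le> N * (s / N - 1) + N * ln \<rho>"
    using s_pos assms(1) by (simp add: ln_le_minus_one)
  also have "\<dots> = s - N + N * ln \<rho>"
    using assms(1) by (simp add: field_simps)
  finally show ?thesis by simp
qed

lemma CV_lagrangian_eq:
  assumes "0 < wsum (rC p c R b t) y"
  shows "CV_lagrangian p c R N b t bC lam y =
    ereal (N * ln (wsum (rC p c R b t) y) - wsum (\<lambda>i \<alpha>. tau_dr b t i \<alpha> + lam \<alpha>) y
           + (\<Sum>i\<in>UNIV. lam i * bC i))"
  using assms
  by (simp add: CV_lagrangian_def CV_obj_def wsum_add_weights wsum_column_weights
      right_diff_distrib sum_subtractf)

lemma CV_lagrangian_le_at_budget_optimum:
  assumes N_pos: "0 < N"
    and tau_nonneg: "\<And>i \<alpha>. 0 \<le> tau_dr b t i \<alpha>" and w: "nonneg_vec w"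
    and x: "nonneg_mat x" "flow_balance b x" "wsum (\<lambda>i \<alpha>. tau_dr b t i \<alpha> + w \<alpha>) x = N"
    and x_max: "eq_cond_ii p c R N b t x w"
    and y: "nonneg_mat y" "flow_balance b y"
  shows "CV_lagrangian p c R N b t (inflow x) w y \<le> CV_lagrangian p c R N b t (inflow x) w x"
proof (cases "0 < wsum (rC p c R b t) y")
  case False
  then show ?thesis by (simp add: CV_lagrangian_def CV_obj_def)
next
  case True
  define s where "s = wsum (\<lambda>i \<alpha>. tau_dr b t i \<alpha> + w \<alpha>)"
  define r where "r = wsum (rC p c R b t)"
  have "0 \<le> s y"
    unfolding s_def using tau_nonneg w y(1) by (intro wsum_nonneg) (simp add: nonneg_vec_def add_nonneg_nonneg)
  moreover have "N * r y \<le> s y * r x"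
    unfolding r_def s_def using x_max x y \<open>0 \<le> s y\<close> N_pos
    by (intro budget_homogeneity_bound) (auto simp: eq_cond_ii_def s_def)
  moreover have "0 < N * r y"
    using True N_pos by (simp add: r_def)
  ultimately have "0 < s y * r x"
    by linarith
  then have "0 < r x"
    using \<open>0 \<le> s y\<close> by (simp add: zero_less_mult_iff)
  have "N * ln (r y) - s y \<le> N * ln (r x) - s x"
    using log_utility_minus_budget_le[of N "r y" "s y" "r x"] \<open>N * r y \<le> s y * r x\<close>
      \<open>0 \<le> s y\<close> True N_pos x(3)
    by (simp add: r_def s_def)
  with \<open>0 < r x\<close> show ?thesis
    using True by (simp add: CV_lagrangian_eq r_def s_def)
qed

lemma CV_optimal_if_capacity_multipliers:
  assumes feasible: "CV_feasible b bC x"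
    and multipliers: "CV_capacity_multipliers p c R N b t bC x lam"
  shows "CV_optimal p c R N b t bC x"
  unfolding CV_optimal_def
proof (intro conjI allI impI feasible)
  fix y assume y: "CV_feasible b bC y"
  have "(\<Sum>i\<in>UNIV. lam i * (inflow y i - bC i)) \<le> 0"
    using y multipliers unfolding CV_feasible_def CV_capacity_multipliers_def nonneg_vec_def
    by (intro sum_nonpos) (simp add: mult_nonneg_nonpos)
  then have "CV_obj p c R N b t y \<le> CV_lagrangian p c R N b t bC lam y"
    unfolding CV_lagrangian_def by (cases "CV_obj p c R N b t y") auto
  also have "\<dots> \<le> CV_lagrangian p c R N b t bC lam x"
    using y multipliers unfolding CV_feasible_def CV_capacity_multipliers_def by blast
  also have "\<dots> = CV_obj p c R N b t x"
    using multipliers unfolding CV_lagrangian_def CV_capacity_multipliers_def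
    by (simp del: mult_eq_0_iff)
  finally show "CV_obj p c R N b t y \<le> CV_obj p c R N b t x" .
qed

theorem proposition4:
  fixes b t :: "'n::finite \<Rightarrow> 'n \<Rightarrow> real"
    and p c R N M :: real
    and xA xC :: "'n \<Rightarrow> 'n \<Rightarrow> real" and wA wC :: "'n \<Rightarrow> real"
  assumes b_nonneg: "\<forall>i j. 0 \<le> b i j"
    and b_pos: "\<forall>i. 0 < (\<Sum>j\<in>UNIV. b i j)"
    and t_pos: "\<forall>i j. i \<noteq> j \<longrightarrow> 0 < t i j"
    and t_diag: "\<forall>i. t i i = 0"
    and p_pos: "0 < p" and c_nonneg: "0 \<le> c"
    and R_range: "0 < R" "R < 1"
    and N_pos: "0 < N" and M_nonneg: "0 \<le> M"
    and eq: "mixed_fleet_equilibrium p c R N M b t xA wA xC wC"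
  shows "CV_optimal p c R N b t (\<lambda>i. \<Sum>j\<in>UNIV. xC j i) xC
       \<and> CV_capacity_multipliers p c R N b t (\<lambda>i. \<Sum>j\<in>UNIV. xC j i) xC wC"
proof -
  have bC: "(\<lambda>i. \<Sum>j\<in>UNIV. xC j i) = inflow xC"
    by (simp add: fun_eq_iff inflow_def)
  have ci: "eq_cond_i N M b t xA wA xC wC" and cii: "eq_cond_ii p c R N b t xC wC"
    using eq unfolding mixed_fleet_equilibrium_def by auto
  have "\<forall>i j. 0 \<le> t i j"
    using t_pos t_diag by (metis order.refl less_imp_le)
  then have "0 \<le> tau_dr b t i \<alpha>" for i \<alpha>
    using b_nonneg by (rule tau_dr_nonneg[rotated])
  then have multipliers: "CV_capacity_multipliers p c R N b t (inflow xC) xC wC"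
    using ci cii N_pos CV_lagrangian_le_at_budget_optimum[of N b t wC xC p c R]
    by (simp add: CV_capacity_multipliers_def eq_cond_i_def)
  moreover have "CV_feasible b (inflow xC) xC"
    using ci by (simp add: CV_feasible_def eq_cond_i_def)
  ultimately show ?thesis
    unfolding bC by (simp add: CV_optimal_if_capacity_multipliers)
qed

end
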